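(* Let $(X_i, A_i, T_i(1), T_i(0), C_i(1), C_i(0), Y_i(1), Y_i(0))$, $i=1,\dots,n$, be i.i.d. copies of $(X, A, T(1), T(0), C(1), C(0), Y(1), Y(0))$, where $X$ is a vector of baseline covariates, $A\in\{0,1\}$ is the treatment indicator, and for $a=0,1$, $Y(a)$ is the potential outcome, $T(a)$ the potential time to a treatment-related intercurrent event, and $C(a)$ the potential time to a treatment-unrelated intercurrent event. The observed quantities are $Y=Y(A)$, $T=T(A)$, $C=C(A)$. Fix a time point $k>0$ and define $$\tau = E[Y(1)1\{T(1)>k\}] - E[Y(0)1\{T(0)>k\}].$$ Assume: (i) $A \perp\!\!\!\perp \{Y(a),T(a),C(a)\}\mid X$ for $a=0,1$, and for some constant $\eta\in(0,0.5)$, $\eta<e(X)<1-\eta$ with probability 1, where $e(X)=\mathrm{pr}(A=1\mid X)$; (ii) $C(a)\perp\!\!\!\perp \{Y(a),T(a)\}\mid X$ for $a=0,1$, and for some constant $\eta_C>0$, $\mathrm{pr}\{C(a)>k\mid X\}>\eta_C$ with probability 1, for $a=0,1$. For $a=0,1$ let $\mu_a(X)=E(Y\mid T\wedge C>k, X, A=a)$, $S_a(t\mid X)=\mathrm{pr}(T>t\mid X,A=a)$ and $G_a(t\mid X)=\mathrm{pr}(C>t\mid X,A=a)$. Then $$\tau = E\{\mu_1(X)S_1(k\mid X) - \mu_0(X)S_0(k\mid X)\}$$ and $$\tau = E\left[\frac{AY1(T\wedge C>k)}{e(X)G_1(k\mid X)} - \frac{(1-A)Y1(T\wedge C>k)}{\{1-e(X)\}G_0(k\mid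 X)}\right].$$
   Context: $a\wedge b$ denotes $\min(a,b)$ and $1(\cdot)$ the indicator function. *)

theory Defs
  imports "HOL-Probability.Probability"
begin

definition sigX :: "'a measure \<Rightarrow> ('a \<Rightarrow> 'x) \<Rightarrow> 'x measure \<Rightarrow> 'a measure" where
  "sigX M X MX = vimage_algebra (space M) X MX"

definition cond_indep ::
  "'a measure \<Rightarrow> 'a measure \<Rightarrow> ('a \<Rightarrow> 'u) \<Rightarrow> 'u measure \<Rightarrow> ('a \<Rightarrow> 'v) \<Rightarrow> 'v measure \<Rightarrow> bool" where
  "cond_indep M F U MU V MV \<longleftrightarrow>
     (\<forall>B\<in>sets MU. \<forall>D\<in>sets MV. AE \<omega> in M.
        real_cond_exp M F (\<lambda>w. indicator B (U w) * indicator D (V w)) \<omega>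
        = real_cond_exp M F (\<lambda>w. indicator B (U w)) \<omega> * real_cond_exp M F (\<lambda>w. indicator D (V w)) \<omega>)"

text \<open>Conditional expectation of f given F and the event E:
  E(f | F, E) = E(f 1_E | F) / E(1_E | F)  (with the convention x/0 = 0).\<close>
definition cond_exp_event :: "'a measure \<Rightarrow> 'a measure \<Rightarrow> 'a set \<Rightarrow> ('a \<Rightarrow> real) \<Rightarrow> 'a \<Rightarrow> real" where
  "cond_exp_event M F E f = (\<lambda>\<omega>. real_cond_exp M F (\<lambda>w. indicator E w * f w) \<omega>
                                  / real_cond_exp M F (indicator E) \<omega>)"

end

theory Submission
  imports Defs
begin

(*
  Unconfoundedness factors
  E[1(A = a) h(Y(a), T(a), C(a)) | X] as pr(A = a | X) E[h | X], and noninformative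
  censoring factors E[1(C(a) > k) h(Y(a), T(a)) | X] as pr(C(a) > k | X) E[h | X].
  Applying both to the numerators and denominators of mu_a, S_a and G_a gives
  mu_a S_a = E[Y(a) 1(T(a) > k) | X], and shows that the inverse probability weighted
  integrand has the same conditional expectation given X. Integrating over X yields both representations of tau.
*)

lemma real_cond_exp_cong_space:
  assumes "\<And>x. x \<in> space M \<Longrightarrow> f x = g x"
  shows "real_cond_exp M F f = real_cond_exp M F g"
proof -
  have nn: "nn_cond_exp M F u = nn_cond_exp M F v"
    if uv: "\<And>x. x \<in> space M \<Longrightarrow> u x = v x" for u v :: "'a \<Rightarrow> ennreal"
  proof (cases "u \<in> borel_measurable M")
    case True
    then have "v \<in> borel_measurable M" using measurable_cong[of M u v] uv by auto
    moreover have "density M u = density M v"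
      using uv by (intro density_cong) (auto simp: True calculation)
    ultimately show ?thesis using True unfolding nn_cond_exp_def by simp
  next
    case False
    then have "v \<notin> borel_measurable M" using measurable_cong[of M u v] uv by auto
    then show ?thesis using False unfolding nn_cond_exp_def by simp
  qed
  show ?thesis
    unfolding real_cond_exp_def using assms by (simp add: nn[of "\<lambda>x. ennreal (f x)" "\<lambda>x. ennreal (g x)"]
        nn[of "\<lambda>x. ennreal (- f x)" "\<lambda>x. ennreal (- g x)"])
qed

lemma cond_exp_event_cong:
  assumes "\<And>\<omega>. \<omega> \<in> space M \<Longrightarrow> \<omega> \<in> E \<longleftrightarrow> \<omega> \<in> E'"
    and "\<And>\<omega>. \<omega> \<in> space M \<Longrightarrow> \<omega> \<in> E \<Longrightarrow> f \<omega> = f' \<omega>"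
  shows "cond_exp_event M F E f = cond_exp_event M F E' f'"
proof -
  have "real_cond_exp M F (\<lambda>w. indicator E w * f w) = real_cond_exp M F (\<lambda>w. indicator E' w * f' w)"
    "real_cond_exp M F (indicator E) = real_cond_exp M F (indicator E')"
    using assms by (auto intro!: real_cond_exp_cong_space simp: indicator_def)
  then show ?thesis unfolding cond_exp_event_def by simp
qed

lemma borel_measurable_cond_exp_event [measurable]:
  "cond_exp_event M F E f \<in> borel_measurable F"
  "cond_exp_event M F E f \<in> borel_measurable M"
  unfolding cond_exp_event_def by measurable

lemma finite_measure_subalgebra_sigX:
  assumes "prob_space M" and "X \<in> measurable M MX"
  shows "finite_measure_subalgebra M (sigX M X MX)"
proof -
  interpret prob_space M by fact
  have "subalgebra M (sigX M X MX)"
    unfolding subalgebra_def sigX_def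
    using assms(2) by (auto simp: sets_vimage_algebra2 measurable_def)
  then show ?thesis by unfold_locales
qed

text \<open>The weighted image measures \<open>distr (density M f\<^sub>i) N V\<close> agree on all events, hence
  they integrate every \<open>g\<close> alike.\<close>
lemma integral_weighted_comp_eqI:
  fixes f1 f2 :: "'a \<Rightarrow> real" and V :: "'a \<Rightarrow> 'v"
  assumes [measurable]: "V \<in> measurable M N" "g \<in> borel_measurable N"
    and "integrable M f1" "integrable M f2"
    and "AE x in M. 0 \<le> f1 x" "AE x in M. 0 \<le> f2 x"
    and eq: "\<And>D. D \<in> sets N \<Longrightarrow>
      (\<integral>x. f1 x * indicator D (V x) \<partial>M) = (\<integral>x. f2 x * indicator D (V x) \<partial>M)"
  shows "(\<integral>x. f1 x * g (V x) \<partial>M) = (\<integral>x. f2 x * g (V x) \<partial>M)"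
proof -
  have image_measure: "emeasure (distr (density M f) N V) D = ennreal (\<integral>x. f x * indicator D (V x) \<partial>M)"
    if f: "integrable M f" "AE x in M. 0 \<le> f x" and [measurable]: "D \<in> sets N" for f D
  proof -
    have [measurable]: "f \<in> borel_measurable M" using f by auto
    have int: "integrable M (\<lambda>x. f x * indicator D (V x))"
      using f(1) by (rule Bochner_Integration.integrable_bound) (auto simp: indicator_def)
    have "emeasure (distr (density M f) N V) D = emeasure (density M f) (V -` D \<inter> space M)"
      by (simp add: emeasure_distr)
    also have "\<dots> = (\<integral>\<^sup>+x. ennreal (f x * indicator D (V x)) \<partial>M)"
      by (subst emeasure_density) (auto intro!: nn_integral_cong simp: indicator_def)
    also have "\<dots> = ennreal (\<integral>x. f x * indicator D (V x) \<partial>M)"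
      using f(2) by (intro nn_integral_eq_integral int) (auto simp: indicator_def)
    finally show ?thesis .
  qed
  have "distr (density M f1) N V = distr (density M f2) N V"
  proof (rule measure_eqI)
    fix D assume "D \<in> sets (distr (density M f1) N V)"
    then have "D \<in> sets N" by simp
    then show "emeasure (distr (density M f1) N V) D = emeasure (distr (density M f2) N V) D"
      by (simp add: image_measure[OF assms(3,5)] image_measure[OF assms(4,6)] eq)
  qed simp
  moreover have "(\<integral>x. f x * g (V x) \<partial>M) = integral\<^sup>L (distr (density M f) N V) g"
    if "integrable M f" "AE x in M. 0 \<le> f x" for f
    using that by (subst integral_distr) (auto simp: integral_density)
  ultimately show ?thesis using assms by simp
qed

context finite_measure_subalgebra
begin

lemma real_cond_exp_unit_interval:
  assumes [measurable]: "f \<in> borel_measurable M"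
    and "\<And>x. x \<in> space M \<Longrightarrow> 0 \<le> f x \<and> f x \<le> 1"
  shows "AE x in M. 0 \<le> real_cond_exp M F f x \<and> real_cond_exp M F f x \<le> 1"
proof -
  have "integrable M f"
    using assms by (intro integrable_const_bound[where B=1]) auto
  then have "AE x in M. 0 \<le> real_cond_exp M F f x" "AE x in M. real_cond_exp M F f x \<le> 1"
    using assms(2) by (auto intro!: real_cond_exp_ge_c real_cond_exp_le_c)
  then show ?thesis by eventually_elim simp
qed

lemma cond_indep_integral_indicator:
  fixes U :: "'a \<Rightarrow> 'u" and V :: "'a \<Rightarrow> 'v"
  assumes [measurable]: "U \<in> measurable M MU" "V \<in> measurable M MV"
    and ci: "cond_indep M F U MU V MV"
    and [measurable]: "B \<in> sets MU" "D \<in> sets MV" "A \<in> sets F"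
  shows "(\<integral>x. indicator A x * indicator B (U x) * indicator D (V x) \<partial>M :: real)
       = (\<integral>x. indicator A x * real_cond_exp M F (\<lambda>w. indicator B (U w)) x * indicator D (V x) \<partial>M)"
proof -
  let ?p = "real_cond_exp M F (\<lambda>w. indicator B (U w))"
  let ?q = "real_cond_exp M F (\<lambda>w. indicator D (V w))"
  have [measurable]: "A \<in> sets M" using subalg \<open>A \<in> sets F\<close> by (auto simp: subalgebra_def)
  have "AE x in M. 0 \<le> ?p x \<and> ?p x \<le> 1"
    by (rule real_cond_exp_unit_interval) auto
  then have p_bound: "AE x in M. norm (indicator A x * ?p x * indicator D (V x)) \<le> 1"
    by eventually_elim (auto simp: indicator_def)
  have "(\<integral>x. indicator A x * indicator B (U x) * indicator D (V x) \<partial>M)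
      = (\<integral>x. indicator A x * (indicator B (U x) * indicator D (V x)) \<partial>M :: real)"
    by (simp add: mult.assoc)
  also have "\<dots> = (\<integral>x. indicator A x * real_cond_exp M F (\<lambda>w. indicator B (U w) * indicator D (V w)) x \<partial>M)"
    by (rule real_cond_exp_intg(2)[symmetric])
       (auto intro!: integrable_const_bound[where B=1] simp: indicator_def)
  also have "\<dots> = (\<integral>x. indicator A x * ?p x * ?q x \<partial>M)"
  proof (intro integral_cong_AE)
    have "AE x in M. real_cond_exp M F (\<lambda>w. indicator B (U w) * indicator D (V w)) x = ?p x * ?q x"
      using ci unfolding cond_indep_def by simp
    then show "AE x in M. indicator A x * real_cond_exp M F (\<lambda>w. indicator B (U w) * indicator D (V w)) x
        = indicator A x * ?p x * ?q x"
      by eventually_elim simp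
  qed auto
  also have "\<dots> = (\<integral>x. indicator A x * ?p x * indicator D (V x) \<partial>M)"
    using p_bound by (intro real_cond_exp_intg(2) integrable_const_bound[where B=1]) auto
  finally show ?thesis .
qed

lemma cond_indep_real_cond_exp_mult:
  fixes U :: "'a \<Rightarrow> 'u" and V :: "'a \<Rightarrow> 'v" and g :: "'v \<Rightarrow> real"
  assumes [measurable]: "U \<in> measurable M MU" "V \<in> measurable M MV"
    and ci: "cond_indep M F U MU V MV" and [measurable]: "B \<in> sets MU"
    and [measurable]: "g \<in> borel_measurable MV" and int_g: "integrable M (\<lambda>w. g (V w))"
  shows "AE x in M. real_cond_exp M F (\<lambda>w. indicator B (U w) * g (V w)) x
     = real_cond_exp M F (\<lambda>w. indicator B (U w)) x * real_cond_exp M F (\<lambda>w. g (V w)) x"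
proof -
  let ?p = "real_cond_exp M F (\<lambda>w. indicator B (U w))"
  let ?c = "real_cond_exp M F (\<lambda>w. g (V w))"
  have p_unit: "AE x in M. 0 \<le> ?p x \<and> ?p x \<le> 1"
    by (rule real_cond_exp_unit_interval) auto
  have p_contracts: "AE x in M. norm (indicator A x * ?p x * h x) \<le> norm (h x)" for A and h :: "'a \<Rightarrow> real"
    using p_unit by eventually_elim (auto simp: indicator_def abs_mult mult_left_le_one_le)
  have weighted: "(\<integral>x. indicator A x * indicator B (U x) * g (V x) \<partial>M) = (\<integral>x. indicator A x * ?p x * g (V x) \<partial>M)"
    if [measurable]: "A \<in> sets F" for A
  proof (rule integral_weighted_comp_eqI[where N=MV])
    have [measurable]: "A \<in> sets M" using subalg that by (auto simp: subalgebra_def)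
    show "integrable M (\<lambda>x. indicator A x * indicator B (U x) :: real)"
      by (rule integrable_const_bound[where B=1]) (auto simp: indicator_def)
    show "integrable M (\<lambda>x. indicator A x * ?p x)"
      using p_contracts[of A "\<lambda>_. 1"] by (intro integrable_const_bound[where B=1]) auto
    show "AE x in M. 0 \<le> indicator A x * ?p x"
      using p_unit by eventually_elim simp
    show "(\<integral>x. indicator A x * indicator B (U x) * indicator D (V x) \<partial>M :: real)
        = (\<integral>x. indicator A x * ?p x * indicator D (V x) \<partial>M)" if "D \<in> sets MV" for D
      using that by (intro cond_indep_integral_indicator[OF _ _ ci]) auto
  qed auto
  show ?thesis
  proof (rule real_cond_exp_charact)
    fix A assume [measurable]: "A \<in> sets F"
    then have [measurable]: "A \<in> sets M" using subalg by (auto simp: subalgebra_def)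
    have "(\<integral>x\<in>A. ?p x * ?c x \<partial>M) = (\<integral>x. indicator A x * ?p x * ?c x \<partial>M)"
      by (simp add: set_lebesgue_integral_def mult.assoc)
    also have "\<dots> = (\<integral>x. indicator A x * ?p x * g (V x) \<partial>M)"
      using p_contracts[of A "\<lambda>x. g (V x)"]
      by (intro real_cond_exp_intg(2) Bochner_Integration.integrable_bound[OF int_g]) auto
    also have "\<dots> = (\<integral>x. indicator A x * indicator B (U x) * g (V x) \<partial>M)"
      using weighted[of A] by simp
    also have "\<dots> = (\<integral>x\<in>A. indicator B (U x) * g (V x) \<partial>M)"
      by (simp add: set_lebesgue_integral_def mult.assoc)
    finally show "(\<integral>x\<in>A. indicator B (U x) * g (V x) \<partial>M) = (\<integral>x\<in>A. ?p x * ?c x \<partial>M)" ..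
  next
    show "integrable M (\<lambda>x. indicator B (U x) * g (V x))"
      by (rule Bochner_Integration.integrable_bound[OF int_g]) (auto simp: indicator_def)
    have "AE x in M. norm (?p x * ?c x) \<le> norm (?c x)"
      using p_unit by eventually_elim (auto simp: abs_mult mult_left_le_one_le)
    then show "integrable M (\<lambda>x. ?p x * ?c x)"
      by (intro Bochner_Integration.integrable_bound[OF real_cond_exp_int(1)[OF int_g]]) auto
  qed auto
qed

lemma real_cond_exp_one_minus:
  assumes "integrable M f"
  shows "AE x in M. real_cond_exp M F (\<lambda>x. 1 - f x) x = 1 - real_cond_exp M F f x"
proof -
  have "AE x in M. real_cond_exp M F (\<lambda>x. 1 - f x) x = real_cond_exp M F (\<lambda>_. 1) x - real_cond_exp M F f x"
    using assms by (intro real_cond_exp_diff) auto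
  moreover have "AE x in M. real_cond_exp M F (\<lambda>_. 1) x = 1"
    by (intro real_cond_exp_F_meas) auto
  ultimately show ?thesis by eventually_elim simp
qed

lemma real_cond_exp_indicator_0_of_binary:
  fixes A :: "'a \<Rightarrow> real"
  assumes [measurable]: "A \<in> borel_measurable M" and binary: "\<And>x. x \<in> space M \<Longrightarrow> A x \<in> {0, 1}"
  shows "AE x in M. real_cond_exp M F (\<lambda>x. indicator {0} (A x)) x
    = 1 - real_cond_exp M F (\<lambda>x. indicator {1} (A x)) x"
proof -
  have "indicator {0} (A x) = (1 - indicator {1} (A x) :: real)" if "x \<in> space M" for x
    using binary[OF that] by (auto simp: indicator_def)
  then have "real_cond_exp M F (\<lambda>x. indicator {0} (A x)) = real_cond_exp M F (\<lambda>x. 1 - indicator {1} (A x))"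
    by (rule real_cond_exp_cong_space)
  moreover have "integrable M (\<lambda>x. indicator {1} (A x) :: real)"
    by (intro integrable_const_bound[where B=1]) auto
  ultimately show ?thesis
    using real_cond_exp_one_minus by simp
qed

lemma real_cond_exp_eq_0_where_dominating_eq_0:
  assumes int_f: "integrable M f" and int_h: "integrable M h"
    and h_nonneg: "\<And>x. x \<in> space M \<Longrightarrow> 0 \<le> h x"
    and f_vanishes: "\<And>x. x \<in> space M \<Longrightarrow> h x = 0 \<Longrightarrow> f x = 0"
  shows "AE x in M. real_cond_exp M F h x = 0 \<longrightarrow> real_cond_exp M F f x = 0"
proof -
  define N where "N = {x \<in> space F. real_cond_exp M F h x = 0}"
  have space_F: "space F = space M" using subalg by (simp add: subalgebra_def)
  have [measurable]: "N \<in> sets F" unfolding N_def by measurable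
  then have [measurable]: "N \<in> sets M" using subalg by (auto simp: subalgebra_def)
  have [measurable]: "f \<in> borel_measurable M" "h \<in> borel_measurable M"
    using int_f int_h by auto
  have int_N: "integrable M (\<lambda>x. indicator N x * f x)" "integrable M (\<lambda>x. indicator N x * h x)"
    using integrable_mult_indicator[OF _ int_f, of N] integrable_mult_indicator[OF _ int_h, of N] by simp_all
  have "(\<integral>x. indicator N x * h x \<partial>M) = (\<integral>x. indicator N x * real_cond_exp M F h x \<partial>M)"
    by (rule real_cond_exp_intg(2)[symmetric]) (auto simp: int_N)
  also have "\<dots> = (\<integral>x. 0 \<partial>M)"
    by (intro Bochner_Integration.integral_cong) (auto simp: N_def indicator_def)
  finally have "AE x in M. indicator N x * h x = 0"
    using h_nonneg by (subst integral_nonneg_eq_0_iff_AE[symmetric]) (auto simp: int_N)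
  then have "AE x in M. indicator N x * f x = 0"
    using AE_space by eventually_elim (auto simp: indicator_def f_vanishes split: if_splits)
  then have "AE x in M. real_cond_exp M F (\<lambda>x. indicator N x * f x) x = real_cond_exp M F (\<lambda>_. 0) x"
    by (intro real_cond_exp_cong) auto
  moreover have "AE x in M. real_cond_exp M F (\<lambda>x. indicator N x * f x) x = indicator N x * real_cond_exp M F f x"
    by (intro real_cond_exp_mult) (auto simp: int_N)
  moreover have "AE x in M. real_cond_exp M F (\<lambda>_. 0) x = 0"
    by (intro real_cond_exp_F_meas) auto
  ultimately show ?thesis
    using AE_space by eventually_elim (auto simp: N_def space_F indicator_def split: if_splits)
qed

end

text \<open>\<open>Y\<close>, \<open>T\<close>, \<open>C\<close> are the potential quantities \<open>Y(a)\<close>, \<open>T(a)\<close>, \<open>C(a)\<close> of a single arm;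
  the arm label \<open>a\<close> is not a parameter but occurs free in the lemmas below.\<close>
locale potential_outcomes = finite_measure_subalgebra M F
  for M :: "'a measure" and F :: "'a measure" +
  fixes A :: "'a \<Rightarrow> real" and Y T C :: "'a \<Rightarrow> real" and k :: real
  assumes measurable_A [measurable]: "A \<in> borel_measurable M"
    and measurable_Y [measurable]: "Y \<in> borel_measurable M"
    and measurable_T [measurable]: "T \<in> borel_measurable M"
    and measurable_C [measurable]: "C \<in> borel_measurable M"
    and unconfounded: "cond_indep M F A borel (\<lambda>\<omega>. (Y \<omega>, T \<omega>, C \<omega>)) borel"
    and noninformative_censoring: "cond_indep M F C borel (\<lambda>\<omega>. (Y \<omega>, T \<omega>)) borel"
    and integrable_outcome: "integrable M (\<lambda>\<omega>. Y \<omega> * indicator {k<..} (T \<omega>))"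
begin

abbreviation "propensity a \<equiv> real_cond_exp M F (\<lambda>\<omega>. indicator {a} (A \<omega>))"
abbreviation "survival_T \<equiv> real_cond_exp M F (\<lambda>\<omega>. indicator {k<..} (T \<omega>))"
abbreviation "survival_C \<equiv> real_cond_exp M F (\<lambda>\<omega>. indicator {k<..} (C \<omega>))"
abbreviation "mean_alive \<equiv> real_cond_exp M F (\<lambda>\<omega>. Y \<omega> * indicator {k<..} (T \<omega>))"

lemma cond_exp_treated_factor:
  assumes "\<phi> \<in> borel_measurable borel" and "\<And>\<omega>. h \<omega> = \<phi> (Y \<omega>, T \<omega>, C \<omega>)" and "integrable M h"
  shows "AE \<omega> in M. real_cond_exp M F (\<lambda>\<omega>. indicator {a} (A \<omega>) * h \<omega>) \<omega>
    = propensity a \<omega> * real_cond_exp M F h \<omega>"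
proof -
  have "(\<lambda>\<omega>. (Y \<omega>, T \<omega>, C \<omega>)) \<in> borel_measurable M"
    unfolding borel_prod[symmetric] by measurable
  moreover have "h = (\<lambda>\<omega>. \<phi> (Y \<omega>, T \<omega>, C \<omega>))"
    using assms(2) by auto
  ultimately show ?thesis
    using cond_indep_real_cond_exp_mult[OF measurable_A _ unconfounded _ assms(1), of "{a}"] assms(3)
    by simp
qed

lemma cond_exp_uncensored_factor:
  assumes "\<phi> \<in> borel_measurable borel" and "\<And>\<omega>. h \<omega> = \<phi> (Y \<omega>, T \<omega>)" and "integrable M h"
  shows "AE \<omega> in M. real_cond_exp M F (\<lambda>\<omega>. indicator {k<..} (C \<omega>) * h \<omega>) \<omega>
    = survival_C \<omega> * real_cond_exp M F h \<omega>"
proof -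
  have "(\<lambda>\<omega>. (Y \<omega>, T \<omega>)) \<in> borel_measurable M"
    unfolding borel_prod[symmetric] by measurable
  moreover have "h = (\<lambda>\<omega>. \<phi> (Y \<omega>, T \<omega>))"
    using assms(2) by auto
  ultimately show ?thesis
    using cond_indep_real_cond_exp_mult[OF measurable_C _ noninformative_censoring _ assms(1), of "{k<..}"]
      assms(3)
    by simp
qed

lemma cond_exp_treated_uncensored:
  assumes "\<phi> \<in> borel_measurable borel" and "\<And>\<omega>. h \<omega> = \<phi> (Y \<omega>, T \<omega>)" and "integrable M h"
  shows "AE \<omega> in M. real_cond_exp M F (\<lambda>\<omega>. indicator {a} (A \<omega>) * (indicator {k<..} (C \<omega>) * h \<omega>)) \<omega>
    = propensity a \<omega> * survival_C \<omega> * real_cond_exp M F h \<omega>"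
proof -
  have [measurable]: "\<phi> \<in> borel_measurable (borel \<Otimes>\<^sub>M borel)"
    using assms(1) by (simp add: borel_prod)
  have meas: "(\<lambda>(y, t, c). indicator {k<..} c * \<phi> (y, t)) \<in> borel_measurable (borel :: (real \<times> real \<times> real) measure)"
    unfolding borel_prod[symmetric] by measurable
  have [measurable]: "h \<in> borel_measurable M"
    using assms(3) by auto
  have int: "integrable M (\<lambda>\<omega>. indicator {k<..} (C \<omega>) * h \<omega>)"
    using assms(3) by (rule Bochner_Integration.integrable_bound) (auto simp: indicator_def)
  have "AE \<omega> in M. real_cond_exp M F (\<lambda>\<omega>. indicator {a} (A \<omega>) * (indicator {k<..} (C \<omega>) * h \<omega>)) \<omega>
      = propensity a \<omega> * real_cond_exp M F (\<lambda>\<omega>. indicator {k<..} (C \<omega>) * h \<omega>) \<omega>"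
    by (rule cond_exp_treated_factor[OF meas _ int]) (simp add: assms(2))
  moreover have "AE \<omega> in M. real_cond_exp M F (\<lambda>\<omega>. indicator {k<..} (C \<omega>) * h \<omega>) \<omega>
      = survival_C \<omega> * real_cond_exp M F h \<omega>"
    using assms by (rule cond_exp_uncensored_factor)
  ultimately show ?thesis by eventually_elim simp
qed

lemma regression_times_survival:
  assumes pos_propensity: "AE \<omega> in M. 0 < propensity a \<omega>"
    and pos_survival_C: "AE \<omega> in M. 0 < survival_C \<omega>"
  shows "AE \<omega> in M. cond_exp_event M F {\<omega>. min (T \<omega>) (C \<omega>) > k \<and> A \<omega> = a} Y \<omega>
      * cond_exp_event M F {\<omega>. A \<omega> = a} (\<lambda>\<omega>. indicator {k<..} (T \<omega>)) \<omega> = mean_alive \<omega>"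
proof -
  let ?Z = "\<lambda>\<omega>. Y \<omega> * indicator {k<..} (T \<omega>)"
  have regression_eq: "cond_exp_event M F {\<omega>. min (T \<omega>) (C \<omega>) > k \<and> A \<omega> = a} Y
    = (\<lambda>\<omega>. real_cond_exp M F (\<lambda>\<omega>. indicator {a} (A \<omega>) * (indicator {k<..} (C \<omega>) * ?Z \<omega>)) \<omega>
         / real_cond_exp M F (\<lambda>\<omega>. indicator {a} (A \<omega>) * (indicator {k<..} (C \<omega>) * indicator {k<..} (T \<omega>))) \<omega>)"
    unfolding cond_exp_event_def
    by (intro ext arg_cong2[where f="(/)"] fun_cong[OF real_cond_exp_cong_space]) (auto simp: indicator_def)
  have survival_eq: "cond_exp_event M F {\<omega>. A \<omega> = a} (\<lambda>\<omega>. indicator {k<..} (T \<omega>))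
    = (\<lambda>\<omega>. real_cond_exp M F (\<lambda>\<omega>. indicator {a} (A \<omega>) * indicator {k<..} (T \<omega>)) \<omega> / propensity a \<omega>)"
    unfolding cond_exp_event_def
    by (intro ext arg_cong2[where f="(/)"] fun_cong[OF real_cond_exp_cong_space]) (auto simp: indicator_def)
  have int_T: "integrable M (\<lambda>\<omega>. indicator {k<..} (T \<omega>) :: real)"
    by (intro integrable_const_bound[where B=1]) auto
  have "AE \<omega> in M. real_cond_exp M F (\<lambda>\<omega>. indicator {a} (A \<omega>) * (indicator {k<..} (C \<omega>) * ?Z \<omega>)) \<omega>
      = propensity a \<omega> * survival_C \<omega> * mean_alive \<omega>"
    by (rule cond_exp_treated_uncensored[where \<phi>="\<lambda>(y, t). y * indicator {k<..} t"])
       (auto simp flip: borel_prod intro: integrable_outcome)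
  moreover have "AE \<omega> in M. real_cond_exp M F (\<lambda>\<omega>. indicator {a} (A \<omega>) * (indicator {k<..} (C \<omega>) * indicator {k<..} (T \<omega>))) \<omega>
      = propensity a \<omega> * survival_C \<omega> * survival_T \<omega>"
    by (rule cond_exp_treated_uncensored[where \<phi>="\<lambda>(y, t). indicator {k<..} t"])
       (auto simp flip: borel_prod intro: int_T)
  moreover have "AE \<omega> in M. real_cond_exp M F (\<lambda>\<omega>. indicator {a} (A \<omega>) * indicator {k<..} (T \<omega>)) \<omega>
      = propensity a \<omega> * survival_T \<omega>"
    by (rule cond_exp_treated_factor[where \<phi>="\<lambda>(y, t, c). indicator {k<..} t"])
       (auto simp flip: borel_prod intro: int_T)
  \<comment> \<open>where \<open>survival_T\<close> vanishes the regression is \<open>0 / 0 = 0\<close>, so \<open>mean_alive\<close> must vanish too\<close>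
  moreover have "AE \<omega> in M. survival_T \<omega> = 0 \<longrightarrow> mean_alive \<omega> = 0"
    by (rule real_cond_exp_eq_0_where_dominating_eq_0[OF integrable_outcome int_T]) auto
  ultimately show ?thesis
    unfolding regression_eq survival_eq using pos_propensity pos_survival_C
    by eventually_elim (auto simp: field_simps)
qed

lemma integral_regression_times_survival:
  assumes "AE \<omega> in M. 0 < propensity a \<omega>" and "AE \<omega> in M. 0 < survival_C \<omega>"
  shows "integrable M (\<lambda>\<omega>. cond_exp_event M F {\<omega>. min (T \<omega>) (C \<omega>) > k \<and> A \<omega> = a} Y \<omega>
      * cond_exp_event M F {\<omega>. A \<omega> = a} (\<lambda>\<omega>. indicator {k<..} (T \<omega>)) \<omega>)" (is "integrable M ?f")
    and "(\<integral>\<omega>. cond_exp_event M F {\<omega>. min (T \<omega>) (C \<omega>) > k \<and> A \<omega> = a} Y \<omega>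
      * cond_exp_event M F {\<omega>. A \<omega> = a} (\<lambda>\<omega>. indicator {k<..} (T \<omega>)) \<omega> \<partial>M)
      = (\<integral>\<omega>. Y \<omega> * indicator {k<..} (T \<omega>) \<partial>M)"
proof -
  have ae: "AE \<omega> in M. ?f \<omega> = mean_alive \<omega>"
    using assms by (rule regression_times_survival)
  show "integrable M ?f"
    using integrable_cong_AE[OF _ _ ae] real_cond_exp_int(1)[OF integrable_outcome] by simp
  have "(\<integral>\<omega>. ?f \<omega> \<partial>M) = (\<integral>\<omega>. mean_alive \<omega> \<partial>M)"
    using ae by (intro integral_cong_AE) auto
  then show "(\<integral>\<omega>. ?f \<omega> \<partial>M) = (\<integral>\<omega>. Y \<omega> * indicator {k<..} (T \<omega>) \<partial>M)"
    using real_cond_exp_int(2)[OF integrable_outcome] by simp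
qed

text \<open>\<open>h\<close> may be any version of the propensity score, e.g. \<open>1 - e\<close> for the control arm.\<close>
lemma inverse_probability_weighting:
  assumes \<eta>_pos: "0 < \<eta>" and propensity_bound: "AE \<omega> in M. \<eta> < propensity a \<omega>"
    and \<eta>C_pos: "0 < \<eta>C" and survival_C_bound: "AE \<omega> in M. \<eta>C < survival_C \<omega>"
    and [measurable]: "h \<in> borel_measurable M" and h_version: "AE \<omega> in M. h \<omega> = propensity a \<omega>"
  defines "G \<equiv> cond_exp_event M F {\<omega>. A \<omega> = a} (\<lambda>\<omega>. indicator {k<..} (C \<omega>))"
  shows "integrable M (\<lambda>\<omega>. indicator {a} (A \<omega>) * Y \<omega> * indicator {k<..} (min (T \<omega>) (C \<omega>)) / (h \<omega> * G \<omega>))"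
      (is "integrable M ?ipw")
    and "(\<integral>\<omega>. indicator {a} (A \<omega>) * Y \<omega> * indicator {k<..} (min (T \<omega>) (C \<omega>)) / (h \<omega> * G \<omega>) \<partial>M)
      = (\<integral>\<omega>. Y \<omega> * indicator {k<..} (T \<omega>) \<partial>M)"
proof -
  let ?Z = "\<lambda>\<omega>. Y \<omega> * indicator {k<..} (T \<omega>)"
  let ?W = "\<lambda>\<omega>. indicator {a} (A \<omega>) * (indicator {k<..} (C \<omega>) * ?Z \<omega>)"
  define w where "w \<omega> = 1 / (propensity a \<omega> * survival_C \<omega>)" for \<omega>
  have [measurable]: "w \<in> borel_measurable F"
    unfolding w_def by measurable
  then have [measurable]: "w \<in> borel_measurable M"
    by (rule measurable_from_subalg[OF subalg])
  have G_eq: "G = (\<lambda>\<omega>. real_cond_exp M F (\<lambda>\<omega>. indicator {a} (A \<omega>) * (indicator {k<..} (C \<omega>) * 1)) \<omega> / propensity a \<omega>)"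
    unfolding G_def cond_exp_event_def
    by (intro ext arg_cong2[where f="(/)"] fun_cong[OF real_cond_exp_cong_space]) (auto simp: indicator_def)
  have "AE \<omega> in M. real_cond_exp M F (\<lambda>\<omega>. indicator {a} (A \<omega>) * (indicator {k<..} (C \<omega>) * 1)) \<omega>
      = propensity a \<omega> * survival_C \<omega> * real_cond_exp M F (\<lambda>_. 1) \<omega>"
    by (rule cond_exp_treated_uncensored[where \<phi>="\<lambda>_. 1"]) auto
  moreover have "AE \<omega> in M. real_cond_exp M F (\<lambda>_. 1) \<omega> = 1"
    by (intro real_cond_exp_F_meas) auto
  ultimately have ipw_eq: "AE \<omega> in M. ?ipw \<omega> = w \<omega> * ?W \<omega>"
    using h_version propensity_bound survival_C_bound unfolding G_eq w_def
    by eventually_elim (use \<eta>_pos \<eta>C_pos in \<open>auto simp: indicator_def\<close>)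
  have W_cond_exp: "AE \<omega> in M. real_cond_exp M F ?W \<omega> = propensity a \<omega> * survival_C \<omega> * mean_alive \<omega>"
    by (rule cond_exp_treated_uncensored[where \<phi>="\<lambda>(y, t). y * indicator {k<..} t"])
       (auto simp flip: borel_prod intro: integrable_outcome)
  have wW_bound: "AE \<omega> in M. norm (w \<omega> * ?W \<omega>) \<le> norm (?Z \<omega> / (\<eta> * \<eta>C))"
    using propensity_bound survival_C_bound
  proof eventually_elim
    case (elim \<omega>)
    have lower: "\<eta> * \<eta>C \<le> propensity a \<omega> * survival_C \<omega>"
      using elim \<eta>_pos \<eta>C_pos by (intro mult_mono) auto
    moreover have "0 < \<eta> * \<eta>C"
      using \<eta>_pos \<eta>C_pos by simp
    ultimately have w_bound: "w \<omega> \<le> 1 / (\<eta> * \<eta>C)" and "0 < w \<omega>"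
      using elim \<eta>_pos \<eta>C_pos unfolding w_def by (auto intro!: divide_left_mono mult_pos_pos)
    then have "norm (w \<omega> * ?W \<omega>) \<le> w \<omega> * \<bar>?Z \<omega>\<bar>"
      by (auto simp: indicator_def abs_mult)
    also have "\<dots> \<le> 1 / (\<eta> * \<eta>C) * \<bar>?Z \<omega>\<bar>"
      using w_bound by (rule mult_right_mono) simp
    also have "\<dots> = norm (?Z \<omega> / (\<eta> * \<eta>C))"
      using \<eta>_pos \<eta>C_pos by simp
    finally show ?case .
  qed
  have int_wW: "integrable M (\<lambda>\<omega>. w \<omega> * ?W \<omega>)"
    by (rule Bochner_Integration.integrable_bound[OF integrable_divide[OF integrable_outcome] _ wW_bound])
       measurable
  have G_measurable [measurable]: "G \<in> borel_measurable M"
    unfolding G_def by measurable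
  have ipw_measurable: "?ipw \<in> borel_measurable M"
    by measurable
  show "integrable M ?ipw"
    using integrable_cong_AE[OF ipw_measurable _ ipw_eq] int_wW by simp
  have "(\<integral>\<omega>. ?ipw \<omega> \<partial>M) = (\<integral>\<omega>. w \<omega> * ?W \<omega> \<partial>M)"
    using ipw_eq by (rule integral_cong_AE[OF ipw_measurable, rotated]) measurable
  also have "\<dots> = (\<integral>\<omega>. w \<omega> * real_cond_exp M F ?W \<omega> \<partial>M)"
    by (rule real_cond_exp_intg(2)[symmetric, OF int_wW]) measurable
  also have "\<dots> = (\<integral>\<omega>. mean_alive \<omega> \<partial>M)"
  proof (rule integral_cong_AE)
    show "AE \<omega> in M. w \<omega> * real_cond_exp M F ?W \<omega> = mean_alive \<omega>"
      using W_cond_exp propensity_bound survival_C_bound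
      by eventually_elim (use \<eta>_pos \<eta>C_pos in \<open>auto simp: w_def\<close>)
  qed measurable
  also have "\<dots> = (\<integral>\<omega>. ?Z \<omega> \<partial>M)"
    by (rule real_cond_exp_int(2)[OF integrable_outcome])
  finally show "(\<integral>\<omega>. ?ipw \<omega> \<partial>M) = (\<integral>\<omega>. ?Z \<omega> \<partial>M)" .
qed

end

theorem theorem1:
  fixes M :: "'a measure" and MX :: "'x measure"
    and X :: "'a \<Rightarrow> 'x" and A :: "'a \<Rightarrow> real"
    and Yp Tp Cp :: "real \<Rightarrow> 'a \<Rightarrow> real"
    and k \<eta> \<eta>C :: real
  assumes prob: "prob_space M"
    and X_meas: "X \<in> measurable M MX"
    and A_meas: "A \<in> borel_measurable M"
    and A_01: "\<forall>\<omega>\<in>space M. A \<omega> \<in> {0, 1}"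
    and pot_meas: "\<forall>a\<in>{0,1::real}. Yp a \<in> borel_measurable M \<and> Tp a \<in> borel_measurable M
                                   \<and> Cp a \<in> borel_measurable M"
    and integ: "\<forall>a\<in>{0,1::real}. integrable M (\<lambda>\<omega>. Yp a \<omega> * indicator {k<..} (Tp a \<omega>))"
    and k_pos: "k > 0"
    \<comment> \<open>(i) no unmeasured confounding and overlap\<close>
    and unconf: "\<forall>a\<in>{0,1::real}. cond_indep M (sigX M X MX) A borel
                      (\<lambda>\<omega>. (Yp a \<omega>, Tp a \<omega>, Cp a \<omega>)) (borel :: (real \<times> real \<times> real) measure)"
    and eta: "0 < \<eta>" "\<eta> < 1/2"
    and overlap: "AE \<omega> in M. \<eta> < real_cond_exp M (sigX M X MX) (\<lambda>w. indicator {1} (A w)) \<omega>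
                      \<and> real_cond_exp M (sigX M X MX) (\<lambda>w. indicator {1} (A w)) \<omega> < 1 - \<eta>"
    \<comment> \<open>(ii) noninformative treatment-unrelated intercurrent events and positivity\<close>
    and cens_indep: "\<forall>a\<in>{0,1::real}. cond_indep M (sigX M X MX) (Cp a) borel
                      (\<lambda>\<omega>. (Yp a \<omega>, Tp a \<omega>)) (borel :: (real \<times> real) measure)"
    and etaC: "\<eta>C > 0"
    and cens_pos: "\<forall>a\<in>{0,1::real}. AE \<omega> in M.
                      real_cond_exp M (sigX M X MX) (\<lambda>w. indicator {k<..} (Cp a w)) \<omega> > \<eta>C"
  defines "Y \<equiv> (\<lambda>\<omega>. Yp (A \<omega>) \<omega>)"
    and "T \<equiv> (\<lambda>\<omega>. Tp (A \<omega>) \<omega>)"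
    and "C \<equiv> (\<lambda>\<omega>. Cp (A \<omega>) \<omega>)"
    and "e \<equiv> real_cond_exp M (sigX M X MX) (\<lambda>w. indicator {1} (A w))"
    and "\<mu> \<equiv> (\<lambda>a. cond_exp_event M (sigX M X MX) {\<omega>. min (Tp (A \<omega>) \<omega>) (Cp (A \<omega>) \<omega>) > k \<and> A \<omega> = a} (\<lambda>w. Yp (A w) w))"
    and "S \<equiv> (\<lambda>a t. cond_exp_event M (sigX M X MX) {\<omega>. A \<omega> = a} (\<lambda>w. indicator {t<..} (Tp (A w) w)))"
    and "G \<equiv> (\<lambda>a t. cond_exp_event M (sigX M X MX) {\<omega>. A \<omega> = a} (\<lambda>w. indicator {t<..} (Cp (A w) w)))"
    and "\<tau> \<equiv> (\<integral>\<omega>. Yp 1 \<omega> * indicator {k<..} (Tp 1 \<omega>) \<partial>M)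
             - (\<integral>\<omega>. Yp 0 \<omega> * indicator {k<..} (Tp 0 \<omega>) \<partial>M)"
  shows "\<tau> = (\<integral>\<omega>. \<mu> 1 \<omega> * S 1 k \<omega> - \<mu> 0 \<omega> * S 0 k \<omega> \<partial>M)
      \<and> \<tau> = (\<integral>\<omega>. A \<omega> * Y \<omega> * indicator {k<..} (min (T \<omega>) (C \<omega>)) / (e \<omega> * G 1 k \<omega>)
                 - (1 - A \<omega>) * Y \<omega> * indicator {k<..} (min (T \<omega>) (C \<omega>)) / ((1 - e \<omega>) * G 0 k \<omega>) \<partial>M)"
proof -
  let ?F = "sigX M X MX"
  let ?E = "\<lambda>a. \<integral>\<omega>. Yp a \<omega> * indicator {k<..} (Tp a \<omega>) \<partial>M"
  let ?propensity = "\<lambda>a. real_cond_exp M ?F (\<lambda>\<omega>. indicator {a} (A \<omega>))"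
  let ?G = "\<lambda>a. cond_exp_event M ?F {\<omega>. A \<omega> = a} (\<lambda>\<omega>. indicator {k<..} (Cp a \<omega>))"
  interpret finite_measure_subalgebra M ?F
    using prob X_meas by (rule finite_measure_subalgebra_sigX)
  have arm: "potential_outcomes M ?F A (Yp a) (Tp a) (Cp a) k" if "a \<in> {0, 1}" for a
    using that A_meas pot_meas unconf cens_indep integ
    by (intro potential_outcomes.intro potential_outcomes_axioms.intro) (unfold_locales, auto)
  have \<mu>_eq: "\<mu> a = cond_exp_event M ?F {\<omega>. min (Tp a \<omega>) (Cp a \<omega>) > k \<and> A \<omega> = a} (Yp a)" for a
    unfolding \<mu>_def by (rule cond_exp_event_cong) auto
  have S_eq: "S a k = cond_exp_event M ?F {\<omega>. A \<omega> = a} (\<lambda>\<omega>. indicator {k<..} (Tp a \<omega>))" for a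
    unfolding S_def by (rule cond_exp_event_cong) auto
  have G_eq: "G a k = ?G a" for a
    unfolding G_def by (rule cond_exp_event_cong) auto
  have propensity_0: "AE \<omega> in M. ?propensity 0 \<omega> = 1 - e \<omega>"
    unfolding e_def using A_01 by (intro real_cond_exp_indicator_0_of_binary[OF A_meas]) simp
  have propensity_bound: "AE \<omega> in M. \<eta> < ?propensity a \<omega>" if "a \<in> {0, 1}" for a
    using that overlap propensity_0 unfolding e_def by (auto elim: eventually_mono)
  have survival_C_bound: "AE \<omega> in M. \<eta>C < real_cond_exp M ?F (\<lambda>\<omega>. indicator {k<..} (Cp a \<omega>)) \<omega>"
    if "a \<in> {0, 1}" for a
    using that cens_pos by blast
  have positivity: "AE \<omega> in M. 0 < ?propensity a \<omega>"
    "AE \<omega> in M. 0 < real_cond_exp M ?F (\<lambda>\<omega>. indicator {k<..} (Cp a \<omega>)) \<omega>" if "a \<in> {0, 1}" for a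
    using propensity_bound[OF that] survival_C_bound[OF that] eta(1) etaC by (auto elim: eventually_mono)
  have regression:
    "integrable M (\<lambda>\<omega>. \<mu> a \<omega> * S a k \<omega>)" "(\<integral>\<omega>. \<mu> a \<omega> * S a k \<omega> \<partial>M) = ?E a"
    if "a \<in> {0, 1}" for a
    unfolding \<mu>_eq S_eq
    using potential_outcomes.integral_regression_times_survival[OF arm positivity, OF that that that] .
  have e_meas: "e \<in> borel_measurable M"
    unfolding e_def by measurable
  have ipw:
    "integrable M (\<lambda>\<omega>. indicator {a} (A \<omega>) * Yp a \<omega> * indicator {k<..} (min (Tp a \<omega>) (Cp a \<omega>)) / (h \<omega> * ?G a \<omega>))"
    "(\<integral>\<omega>. indicator {a} (A \<omega>) * Yp a \<omega> * indicator {k<..} (min (Tp a \<omega>) (Cp a \<omega>)) / (h \<omega> * ?G a \<omega>) \<partial>M) = ?E a"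
    if "a \<in> {0, 1}" and "h \<in> borel_measurable M" and "AE \<omega> in M. h \<omega> = ?propensity a \<omega>" for a h
    using potential_outcomes.inverse_probability_weighting[OF arm eta(1) propensity_bound etaC survival_C_bound,
        OF that(1) that(1) that(1) that(2,3)] .
  have "\<tau> = (\<integral>\<omega>. \<mu> 1 \<omega> * S 1 k \<omega> - \<mu> 0 \<omega> * S 0 k \<omega> \<partial>M)"
    unfolding \<tau>_def using regression[of 0] regression[of 1] by simp
  moreover have "\<tau> = (\<integral>\<omega>. A \<omega> * Y \<omega> * indicator {k<..} (min (T \<omega>) (C \<omega>)) / (e \<omega> * G 1 k \<omega>)
      - (1 - A \<omega>) * Y \<omega> * indicator {k<..} (min (T \<omega>) (C \<omega>)) / ((1 - e \<omega>) * G 0 k \<omega>) \<partial>M)"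
      (is "_ = integral\<^sup>L M ?ipw")
  proof -
    have "integral\<^sup>L M ?ipw = (\<integral>\<omega>. indicator {1} (A \<omega>) * Yp 1 \<omega> * indicator {k<..} (min (Tp 1 \<omega>) (Cp 1 \<omega>)) / (e \<omega> * ?G 1 \<omega>)
      - indicator {0} (A \<omega>) * Yp 0 \<omega> * indicator {k<..} (min (Tp 0 \<omega>) (Cp 0 \<omega>)) / ((1 - e \<omega>) * ?G 0 \<omega>) \<partial>M)"
      using A_01 unfolding Y_def T_def C_def G_eq
      by (intro Bochner_Integration.integral_cong) (auto simp: indicator_def)
    then show ?thesis
      unfolding \<tau>_def using ipw[of 1 e] ipw[of 0 "\<lambda>\<omega>. 1 - e \<omega>"] e_meas propensity_0
      by (simp add: e_def AE_symmetric)
  qed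
  ultimately show ?thesis ..
qed

end
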